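(* Fix a user $i$, a horizon $T\in\mathbb{N}$, integrable real random variables $X_i(t)$ and $Y_i(t)$ with $Y_i(t)\ge 0$ almost surely ($t=1,\dots,T$), a constant $C_{\text{a},i}\ge 0$, and real constants $\pi_{\text{PV}},\pi_{\text{in}},\pi_{\text{out}},\pi_{\text{gas}}$. For $a_i\ge 0$ define $$J_i(a_i,C_{\text{a},i})=a_i\pi_{\text{PV}}+\sum_{t=1}^{T}\Big\{-\pi_{\text{in}}\,\mathbb{E}\big[\max\{a_iY_i(t)-X_i(t),0\}\big]+\pi_{\text{out}}\,\mathbb{E}\big[\min\{\max\{X_i(t)-a_iY_i(t),0\},\,C_{\text{a},i}\}\big]+\pi_{\text{gas}}\,\mathbb{E}\big[\max\{X_i(t)-a_iY_i(t)-C_{\text{a},i},0\}\big]\Big\}.$$ If $\pi_{\text{gas}}\ge\pi_{\text{out}}\ge\pi_{\text{in}}$, then $J_i$ is convex with respect to $a_i$.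
   Context: This is the cost of user $i$ in a joint-storage scenario: $a_i$ is the area of PV panels, $X_i(t)$ the daily power consumption, $Y_i(t)$ the PV generation per unit area on day $t$, $C_{\text{a},i}$ the maximal daily amount of power user $i$ may buy from a manager, $\pi_{\text{in}}$ the price at which the user sells surplus power to the manager (possibly negative), $\pi_{\text{out}}$ the price at which the manager sells power to the user, $\pi_{\text{gas}}$ the unit cost of fuel-cell generation, $\pi_{\text{PV}}$ the unit price of PV panels. *)

theory Defs
  imports "HOL-Probability.Probability"
begin

definition cost_J ::
  "'s measure \<Rightarrow> nat \<Rightarrow> (nat \<Rightarrow> 's \<Rightarrow> real) \<Rightarrow> (nat \<Rightarrow> 's \<Rightarrow> real) \<Rightarrow>
   real \<Rightarrow> real \<Rightarrow> real \<Rightarrow> real \<Rightarrow> real \<Rightarrow> real \<Rightarrow> real"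
where
  "cost_J M T X Y pi_PV pi_in pi_out pi_gas a Ca =
     a * pi_PV +
     (\<Sum>t=1..T.
        - pi_in * (\<integral>w. max (a * Y t w - X t w) 0 \<partial>M)
        + pi_out * (\<integral>w. min (max (X t w - a * Y t w) 0) Ca \<partial>M)
        + pi_gas * (\<integral>w. max (X t w - a * Y t w - Ca) 0 \<partial>M))"

end

theory Submission
  imports Defs
begin

text \<open>As a function of the net demand \<open>u = X - a Y\<close>, the daily cost equals
  \<open>\<pi>\<^sub>i\<^sub>n u + (\<pi>\<^sub>o\<^sub>u\<^sub>t - \<pi>\<^sub>i\<^sub>n) max u 0 + (\<pi>\<^sub>g\<^sub>a\<^sub>s - \<pi>\<^sub>o\<^sub>u\<^sub>t) max (u - C\<^sub>a) 0\<close>. The price ordering makes this a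
  linear function plus a nonnegative combination of hinge functions, hence convex in \<open>u\<close>, and so
  in \<open>a\<close> for every outcome. Taking expectations, summing over the days and adding the linear
  investment cost preserve convexity.\<close>

lemma convex_on_max:
  assumes "convex_on S f" "convex_on S g"
  shows "convex_on S (\<lambda>x. max (f x) (g x))"
proof (rule convex_onI)
  fix t :: real and x y assume t: "0 < t" "t < 1" and xy: "x \<in> S" "y \<in> S"
  let ?z = "(1 - t) *\<^sub>R x + t *\<^sub>R y"
  have "f ?z \<le> (1 - t) * f x + t * f y" "g ?z \<le> (1 - t) * g x + t * g y"
    using convex_onD[OF assms(1)] convex_onD[OF assms(2)] t xy by auto
  moreover have "(1 - t) * h x + t * h y \<le> (1 - t) * max (f x) (g x) + t * max (f y) (g y)"
    if "h = f \<or> h = g" for h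
    using that t by (intro add_mono mult_left_mono) auto
  ultimately show "max (f ?z) (g ?z) \<le> (1 - t) * max (f x) (g x) + t * max (f y) (g y)"
    by fastforce
qed (use assms convex_on_imp_convex in blast)

lemma convex_on_affine_real:
  fixes c d :: real
  assumes "convex S"
  shows "convex_on S (\<lambda>x. c * x + d)"
  using assms by (intro convex_onI) (simp_all add: algebra_simps)

lemma convex_on_compose_affine_real:
  fixes f :: "real \<Rightarrow> real"
  assumes "convex_on UNIV f" "convex S"
  shows "convex_on S (\<lambda>x. f (b - x * c))"
proof (rule convex_onI)
  fix t x y :: real assume "0 < t" "t < 1"
  moreover have "b - ((1 - t) *\<^sub>R x + t *\<^sub>R y) * c = (1 - t) *\<^sub>R (b - x * c) + t *\<^sub>R (b - y * c)"
    by (simp add: algebra_simps)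
  ultimately show "f (b - ((1 - t) *\<^sub>R x + t *\<^sub>R y) * c) \<le> (1 - t) * f (b - x * c) + t * f (b - y * c)"
    using convex_onD[OF assms(1)] by simp
qed (fact assms(2))

lemma convex_on_sum_fun:
  assumes "convex S" "\<And>i. i \<in> I \<Longrightarrow> convex_on S (f i)"
  shows "convex_on S (\<lambda>x. \<Sum>i\<in>I. f i x)"
proof (cases "finite I")
  case True
  then show ?thesis
    using assms(2)
    by (induction I rule: finite_induct) (auto simp: convex_on_const assms(1))
qed (simp add: convex_on_const assms(1))

lemma convex_on_integral:
  fixes f :: "'a::real_vector \<Rightarrow> 's \<Rightarrow> real"
  assumes "convex S"
    and integrable: "\<And>x. x \<in> S \<Longrightarrow> integrable M (f x)"
    and convex: "AE w in M. convex_on S (\<lambda>x. f x w)"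
  shows "convex_on S (\<lambda>x. \<integral>w. f x w \<partial>M)"
proof (rule convex_onI)
  fix t :: real and x y assume t: "0 < t" "t < 1" and xy: "x \<in> S" "y \<in> S"
  let ?z = "(1 - t) *\<^sub>R x + t *\<^sub>R y"
  have "?z \<in> S"
    using \<open>convex S\<close> t xy by (simp add: convex_alt)
  moreover have "AE w in M. f ?z w \<le> (1 - t) * f x w + t * f y w"
    using convex by eventually_elim (use t xy in \<open>auto intro: convex_onD\<close>)
  ultimately have "(\<integral>w. f ?z w \<partial>M) \<le> (\<integral>w. (1 - t) * f x w + t * f y w \<partial>M)"
    using integrable xy by (intro integral_mono_AE) auto
  also have "\<dots> = (1 - t) * (\<integral>w. f x w \<partial>M) + t * (\<integral>w. f y w \<partial>M)"
    using integrable xy by simp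
  finally show "(\<integral>w. f ?z w \<partial>M) \<le> (1 - t) * (\<integral>w. f x w \<partial>M) + t * (\<integral>w. f y w \<partial>M)" .
qed (fact assms(1))

definition net_demand_cost :: "real \<Rightarrow> real \<Rightarrow> real \<Rightarrow> real \<Rightarrow> real \<Rightarrow> real" where
  "net_demand_cost pi_in pi_out pi_gas Ca u =
     - pi_in * max (- u) 0 + pi_out * min (max u 0) Ca + pi_gas * max (u - Ca) 0"

lemma net_demand_cost_eq_hinges:
  assumes "Ca \<ge> 0"
  shows "net_demand_cost pi_in pi_out pi_gas Ca u =
           pi_in * u + (pi_out - pi_in) * max u 0 + (pi_gas - pi_out) * max (u - Ca) 0"
proof -
  have hinges: "max (- u) 0 = max u 0 - u" "min (max u 0) Ca = max u 0 - max (u - Ca) 0"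
    using assms by auto
  show ?thesis
    unfolding net_demand_cost_def hinges by (simp add: algebra_simps)
qed

lemma convex_on_hinge: "convex_on UNIV (\<lambda>u::real. max (u - c) 0)"
  using convex_on_affine_real[of UNIV 1 "- c"] convex_on_affine_real[of UNIV 0 0]
  by (intro convex_on_max) simp_all

lemma convex_on_net_demand_cost:
  assumes "Ca \<ge> 0" "pi_in \<le> pi_out" "pi_out \<le> pi_gas"
  shows "convex_on UNIV (net_demand_cost pi_in pi_out pi_gas Ca)"
  unfolding net_demand_cost_eq_hinges[OF assms(1), abs_def]
  using assms(2,3) convex_on_hinge[of 0] convex_on_hinge[of Ca]
  by (intro convex_on_add convex_on_cmul convex_on_affine_real[of UNIV _ 0, simplified]) simp_all

lemma integrable_net_demand_cost:
  assumes "finite_measure M" "integrable M X" "integrable M Y"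
  shows "integrable M (\<lambda>w. net_demand_cost pi_in pi_out pi_gas Ca (X w - a * Y w))"
proof -
  interpret finite_measure M by fact
  show ?thesis
    unfolding net_demand_cost_def using assms(2,3) by auto
qed

lemma cost_J_eq_sum_integral:
  assumes "finite_measure M"
    and "\<And>t. t \<in> {1..T} \<Longrightarrow> integrable M (X t)" "\<And>t. t \<in> {1..T} \<Longrightarrow> integrable M (Y t)"
  shows "cost_J M T X Y pi_PV pi_in pi_out pi_gas a Ca =
           a * pi_PV + (\<Sum>t=1..T. \<integral>w. net_demand_cost pi_in pi_out pi_gas Ca (X t w - a * Y t w) \<partial>M)"
  unfolding cost_J_def
proof (intro arg_cong2[where f = "(+)"] refl sum.cong)
  interpret finite_measure M by fact
  fix t assume "t \<in> {1..T}"
  then have "integrable M (X t)" "integrable M (Y t)"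
    using assms(2,3) by auto
  then have "integrable M (\<lambda>w. max (a * Y t w - X t w) 0)"
    "integrable M (\<lambda>w. min (max (X t w - a * Y t w) 0) Ca)"
    "integrable M (\<lambda>w. max (X t w - a * Y t w - Ca) 0)"
    by auto
  then show "- pi_in * (\<integral>w. max (a * Y t w - X t w) 0 \<partial>M)
      + pi_out * (\<integral>w. min (max (X t w - a * Y t w) 0) Ca \<partial>M)
      + pi_gas * (\<integral>w. max (X t w - a * Y t w - Ca) 0 \<partial>M)
      = (\<integral>w. net_demand_cost pi_in pi_out pi_gas Ca (X t w - a * Y t w) \<partial>M)"
    unfolding net_demand_cost_def by simp
qed

theorem lemma2:
  fixes M :: "'s measure" and T :: nat
    and X Y :: "nat \<Rightarrow> 's \<Rightarrow> real"
    and Ca pi_PV pi_in pi_out pi_gas :: real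
  assumes "prob_space M"
    and "\<And>t. t \<in> {1..T} \<Longrightarrow> integrable M (X t)"
    and "\<And>t. t \<in> {1..T} \<Longrightarrow> integrable M (Y t)"
    and "\<And>t. t \<in> {1..T} \<Longrightarrow> (AE w in M. Y t w \<ge> 0)"
    and "Ca \<ge> 0"
    and "pi_gas \<ge> pi_out" and "pi_out \<ge> pi_in"
  shows "convex_on {0..} (\<lambda>a. cost_J M T X Y pi_PV pi_in pi_out pi_gas a Ca)"
proof -
  have finite_measure: "finite_measure M"
    using assms(1) by (rule prob_space.finite_measure)
  have daily: "convex_on UNIV (\<lambda>a. \<integral>w. net_demand_cost pi_in pi_out pi_gas Ca (X t w - a * Y t w) \<partial>M)"
    if "t \<in> {1..T}" for t
    using assms(2,3)[OF that] convex_on_net_demand_cost[OF assms(5,7,6)] finite_measure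
    by (intro convex_on_integral AE_I2 convex_on_compose_affine_real integrable_net_demand_cost) auto
  have "convex_on UNIV (\<lambda>a. pi_PV * a + 0)"
    by (rule convex_on_affine_real) simp
  then have "convex_on UNIV (\<lambda>a. a * pi_PV +
      (\<Sum>t=1..T. \<integral>w. net_demand_cost pi_in pi_out pi_gas Ca (X t w - a * Y t w) \<partial>M))"
    using daily by (intro convex_on_add convex_on_sum_fun) (simp_all add: mult.commute)
  then have "convex_on UNIV (\<lambda>a. cost_J M T X Y pi_PV pi_in pi_out pi_gas a Ca)"
    by (simp only: cost_J_eq_sum_integral[OF finite_measure assms(2,3)])
  then show ?thesis
    by (rule convex_on_subset) (auto simp: convex_real_interval)
qed

end
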